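(* Assume the standing assumptions with $L>\mu>0$, and let $x^*$ be a minimizer of $F$. Let $q:=\mu/L$, fix $r\in(\sqrt q,1/\sqrt q)$, set $\alpha:=r\sqrt q$ and $\theta:=(1-r^{-1}\sqrt q)(1-r\sqrt q)(1-q)^{-1}$. Consider the algorithm: $y_1=x_1\in\mathbb R^n$ arbitrary, and for $k\ge1$, $$x_{k+1}:=T_L(y_k)=y_k-L^{-1}\mathcal G_L(y_k),\qquad y_{k+1}:=x_{k+1}+\theta(x_{k+1}-x_k).$$ Then for all $k\ge1$, $$F(x_{k+1})-F(x^* )+\frac{L\alpha^2}{2}\big\|x_{k+1}-x^*+(\alpha^{-1}-1)(x_{k+1}-x_k)\big\|^2\le\Big(1-\min\Big(\frac{\mu}{\alpha L},\alpha\Big)\Big)^k\Big(F(x_1)-F(x^* )+\frac{L\alpha^2}{2}\|x_1-x^*\|^2\Big).$$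
   Context: Standing assumptions: $f:\mathbb R^n\to\mathbb R$ differentiable with $L$-Lipschitz gradient and $\mu$-strongly convex (i.e. $f-\frac\mu2\|\cdot\|^2$ convex); $g:\mathbb R^n\to\mathbb R\cup\{+\infty\}$ proper, closed, convex; $F=f+g$. $T_L(y):=\operatorname{argmin}_x\{g(x)+\langle\nabla f(y),x\rangle+\frac L2\|x-y\|^2\}$, $\mathcal G_L(y):=L(y-T_L(y))$. The right-hand side is $+\infty$ if $x_1\notin\operatorname{dom}g$. *)

theory Defs
  imports "HOL-Analysis.Analysis"
begin

text \<open>The extended-real-valued function g : R^n -> R \<union> {+inf} is represented by
  its effective domain C = dom g together with its (real) values on C.
  g is proper, closed, convex iff C is nonempty and convex, g is convex on C and
  its epigraph is closed.\<close>

definition proper_closed_convex :: "('a::euclidean_space \<Rightarrow> real) \<Rightarrow> 'a set \<Rightarrow> bool" where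
  "proper_closed_convex g C \<longleftrightarrow>
     C \<noteq> {} \<and> convex C \<and> convex_on C g \<and> closed {(x, t). x \<in> C \<and> g x \<le> t}"

definition T_L :: "('a::euclidean_space \<Rightarrow> real) \<Rightarrow> 'a set \<Rightarrow> ('a \<Rightarrow> 'a) \<Rightarrow> real \<Rightarrow> 'a \<Rightarrow> 'a" where
  "T_L g C gradf L y =
     (THE x. x \<in> C \<and> (\<forall>z\<in>C. g x + inner (gradf y) x + L / 2 * (norm (x - y))\<^sup>2
                              \<le> g z + inner (gradf y) z + L / 2 * (norm (z - y))\<^sup>2))"

definition G_L :: "('a::euclidean_space \<Rightarrow> real) \<Rightarrow> 'a set \<Rightarrow> ('a \<Rightarrow> 'a) \<Rightarrow> real \<Rightarrow> 'a \<Rightarrow> 'a" where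
  "G_L g C gradf L y = L *\<^sub>R (y - T_L g C gradf L y)"

end

theory Submission
  imports Defs
begin

text \<open>Let \<open>F = f + g\<close> and \<open>z\<^sub>k = (1 - \<alpha>) x\<^sub>k + \<alpha> x\<^sup>*\<close>. The potential on the left-hand side
  is \<open>F(x\<^sub>k\<^sub>+\<^sub>1) - F(x\<^sup>*) + L/2 \<parallel>z\<^sub>k - x\<^sub>k\<^sub>+\<^sub>1\<parallel>\<^sup>2\<close>. The proximal gradient step satisfies
  \<open>F(T\<^sub>L y) \<le> F(z) + (L - \<mu>)/2 \<parallel>z - y\<parallel>\<^sup>2 - L/2 \<parallel>z - T\<^sub>L y\<parallel>\<^sup>2\<close> for every \<open>z \<in> dom g\<close>.
  Taking \<open>z = z\<^sub>k\<close>, \<open>y = y\<^sub>k\<close> and using strong convexity of \<open>F\<close> on the segment \<open>[x\<^sub>k, x\<^sup>*]\<close>,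
  the function-value gap contracts by \<open>1 - \<alpha>\<close>; the momentum \<open>\<theta>\<close> is chosen exactly so that
  the remaining quadratic terms combine into \<open>(1 - \<mu>/(\<alpha>L))\<close> times the previous distance
  term plus a nonpositive remainder.\<close>

definition lyapunov :: "('a::real_inner \<Rightarrow> real) \<Rightarrow> 'a \<Rightarrow> real \<Rightarrow> real \<Rightarrow> 'a \<Rightarrow> 'a \<Rightarrow> real" where
  "lyapunov F xs L \<alpha> x x' = F x - F xs + L * \<alpha>\<^sup>2 / 2 * (norm (x - xs + (1 / \<alpha> - 1) *\<^sub>R (x - x')))\<^sup>2"

lemma has_real_derivative_along_line:
  fixes f :: "'a::real_inner \<Rightarrow> real"
  assumes grad: "\<And>z. GDERIV f z :> gradf z"
  shows "((\<lambda>t. f (y + t *\<^sub>R d)) has_real_derivative inner d (gradf (y + t *\<^sub>R d))) (at t)"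
proof -
  have line: "((\<lambda>t. y + t *\<^sub>R d) has_derivative (\<lambda>h. h *\<^sub>R d)) (at t)"
    by (auto intro!: derivative_eq_intros)
  have "((\<lambda>t. f (y + t *\<^sub>R d)) has_derivative (\<lambda>h. inner (h *\<^sub>R d) (gradf (y + t *\<^sub>R d)))) (at t)"
    using has_derivative_compose[OF line grad[unfolded gderiv_def]] .
  moreover have "(\<lambda>h. inner (h *\<^sub>R d) (gradf (y + t *\<^sub>R d))) = (*) (inner d (gradf (y + t *\<^sub>R d)))"
    by (auto simp: fun_eq_iff)
  ultimately show ?thesis unfolding has_field_derivative_def by simp
qed

lemma lipschitz_gradient_quadratic_bounds:
  fixes f :: "'a::real_inner \<Rightarrow> real"
  assumes grad: "\<And>z. GDERIV f z :> gradf z"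
    and lip: "\<And>u v. norm (gradf u - gradf v) \<le> L * norm (u - v)"
  shows "f x \<le> f y + inner (gradf y) (x - y) + L / 2 * (norm (x - y))\<^sup>2"
    and "f x \<ge> f y + inner (gradf y) (x - y) - L / 2 * (norm (x - y))\<^sup>2"
proof -
  define d where "d = x - y"
  define h where "h t = f (y + t *\<^sub>R d) - t * inner (gradf y) d - L / 2 * t^2 * (norm d)^2" for t
  define k where "k t = f (y + t *\<^sub>R d) - t * inner (gradf y) d + L / 2 * t^2 * (norm d)^2" for t
  have slope: "\<bar>inner d (gradf (y + t *\<^sub>R d)) - inner (gradf y) d\<bar> \<le> L * t * (norm d)^2"
    if "0 \<le> t" for t
  proof -
    have "\<bar>inner d (gradf (y + t *\<^sub>R d)) - inner (gradf y) d\<bar> = \<bar>inner d (gradf (y + t *\<^sub>R d) - gradf y)\<bar>"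
      by (simp add: inner_diff_right inner_commute)
    also have "\<dots> \<le> norm d * norm (gradf (y + t *\<^sub>R d) - gradf y)"
      by (rule Cauchy_Schwarz_ineq2)
    also have "\<dots> \<le> norm d * (L * norm (t *\<^sub>R d))"
      using lip[of "y + t *\<^sub>R d" y] by (intro mult_left_mono) auto
    also have "\<dots> = L * t * (norm d)^2" using that by (simp add: power2_eq_square)
    finally show ?thesis .
  qed
  have dh: "(h has_real_derivative
      (inner d (gradf (y + t *\<^sub>R d)) - inner (gradf y) d - L * t * (norm d)^2)) (at t)" for t
    unfolding h_def by (auto intro!: derivative_eq_intros has_real_derivative_along_line[OF grad])
  have dk: "(k has_real_derivative
      (inner d (gradf (y + t *\<^sub>R d)) - inner (gradf y) d + L * t * (norm d)^2)) (at t)" for t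
    unfolding k_def by (auto intro!: derivative_eq_intros has_real_derivative_along_line[OF grad])
  have "h 1 \<le> h 0"
    by (rule DERIV_nonpos_imp_nonincreasing[of 0 1 h])
      (use dh slope in \<open>fastforce simp: abs_le_iff\<close>)+
  then show "f x \<le> f y + inner (gradf y) (x - y) + L / 2 * (norm (x - y))\<^sup>2"
    by (simp add: h_def d_def)
  have "k 0 \<le> k 1"
    by (rule DERIV_nonneg_imp_nondecreasing[of 0 1 k])
      (use dk slope in \<open>fastforce simp: abs_le_iff\<close>)+
  then show "f x \<ge> f y + inner (gradf y) (x - y) - L / 2 * (norm (x - y))\<^sup>2"
    by (simp add: k_def d_def)
qed

text \<open>Each first-order inequality below is obtained by moving a fraction \<open>t\<close> along a
  segment, dividing by \<open>t\<close> and letting \<open>t \<rightarrow> 0\<close>; this lemma performs the limit.\<close>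

lemma le_of_le_add_mult_small:
  fixes A B K :: real
  assumes "\<And>t. 0 < t \<Longrightarrow> t \<le> 1 \<Longrightarrow> A \<le> B + t * K"
  shows "A \<le> B"
proof (rule ccontr)
  assume "\<not> A \<le> B"
  define t where "t = min 1 ((A - B) / (2 * (\<bar>K\<bar> + 1)))"
  have pos: "0 < t" using \<open>\<not> A \<le> B\<close> by (auto simp: t_def)
  have "t \<le> 1" by (simp add: t_def)
  have "t * K \<le> t * \<bar>K\<bar>" using pos by (intro mult_left_mono) auto
  also have "\<dots> \<le> (A - B) / (2 * (\<bar>K\<bar> + 1)) * \<bar>K\<bar>"
    by (intro mult_right_mono) (auto simp: t_def)
  also have "\<dots> < A - B"
    using \<open>\<not> A \<le> B\<close> mult_strict_right_mono[of B A "\<bar>K\<bar> + 2"]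
    by (simp add: field_simps algebra_simps)
  finally show False using assms[OF pos \<open>t \<le> 1\<close>] by linarith
qed

lemma norm_scaleR_add_power2:
  fixes u v :: "'a::real_inner"
  shows "(norm (a *\<^sub>R u + b *\<^sub>R v))\<^sup>2 = a\<^sup>2 * (norm u)\<^sup>2 + 2 * a * b * inner u v + b\<^sup>2 * (norm v)\<^sup>2"
  unfolding power2_norm_eq_inner
  by (simp add: inner_add_left inner_add_right inner_commute algebra_simps power2_eq_square)

lemma norm_convex_combination_power2:
  fixes a b :: "'a::real_inner"
  shows "(norm ((1 - t) *\<^sub>R a + t *\<^sub>R b))\<^sup>2
       = (1 - t) * (norm a)\<^sup>2 + t * (norm b)\<^sup>2 - t * (1 - t) * (norm (a - b))\<^sup>2"
  by (simp add: power2_norm_eq_inner inner_add_left inner_add_right inner_diff_left inner_diff_right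
      inner_commute algebra_simps)

lemma strongly_convex_combination:
  fixes f :: "'a::real_inner \<Rightarrow> real"
  assumes sconv: "convex_on UNIV (\<lambda>z. f z - \<mu> / 2 * (norm z)\<^sup>2)" and t: "0 \<le> t" "t \<le> 1"
  shows "f ((1 - t) *\<^sub>R a + t *\<^sub>R b)
       \<le> (1 - t) * f a + t * f b - \<mu> / 2 * (t * (1 - t) * (norm (a - b))\<^sup>2)"
proof -
  have "f ((1 - t) *\<^sub>R a + t *\<^sub>R b) - \<mu> / 2 * (norm ((1 - t) *\<^sub>R a + t *\<^sub>R b))\<^sup>2
      \<le> (1 - t) * (f a - \<mu> / 2 * (norm a)\<^sup>2) + t * (f b - \<mu> / 2 * (norm b)\<^sup>2)"
    using convex_onD[OF sconv t] by simp
  then show ?thesis unfolding norm_convex_combination_power2 by (simp add: field_simps)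
qed

lemma strongly_convex_gradient_lower_bound:
  fixes f :: "'a::real_inner \<Rightarrow> real"
  assumes grad: "\<And>z. GDERIV f z :> gradf z"
    and lip: "\<And>u v. norm (gradf u - gradf v) \<le> L * norm (u - v)"
    and sconv: "convex_on UNIV (\<lambda>z. f z - \<mu> / 2 * (norm z)\<^sup>2)"
  shows "f y + inner (gradf y) (z - y) + \<mu> / 2 * (norm (z - y))\<^sup>2 \<le> f z"
proof -
  define D where "D = (norm (z - y))\<^sup>2"
  have "f y + inner (gradf y) (z - y) + \<mu> / 2 * D \<le> f z + t * ((L + \<mu>) / 2 * D)"
    if t: "0 < t" "t \<le> 1" for t
  proof -
    define w where "w = (1 - t) *\<^sub>R y + t *\<^sub>R z"
    have wy: "w - y = t *\<^sub>R (z - y)" by (simp add: w_def algebra_simps)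
    have "f w \<le> (1 - t) * f y + t * f z - \<mu> / 2 * (t * (1 - t) * D)"
      unfolding w_def D_def using strongly_convex_combination[OF sconv, of t y z] t
      by (simp add: norm_minus_commute)
    moreover have "f w \<ge> f y + inner (gradf y) (w - y) - L / 2 * (norm (w - y))\<^sup>2"
      by (rule lipschitz_gradient_quadratic_bounds(2)[OF grad lip])
    moreover have "inner (gradf y) (w - y) = t * inner (gradf y) (z - y)" by (simp add: wy)
    moreover have "(norm (w - y))\<^sup>2 = t\<^sup>2 * D" by (simp add: wy D_def power_mult_distrib)
    ultimately have "t * (f y + inner (gradf y) (z - y) + \<mu> / 2 * D)
                   \<le> t * (f z + t * ((L + \<mu>) / 2 * D))"
      by (simp add: field_simps power2_eq_square)
    then show ?thesis using t by simp
  qed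
  then show ?thesis unfolding D_def by (rule le_of_le_add_mult_small)
qed

lemma minimizer_neg_gradient_subgradient:
  fixes f g :: "'a::real_inner \<Rightarrow> real"
  assumes grad: "\<And>z. GDERIV f z :> gradf z"
    and lip: "\<And>u v. norm (gradf u - gradf v) \<le> L * norm (u - v)"
    and gconv: "convex_on C g" and "convex C"
    and xs: "xs \<in> C" "\<And>z. z \<in> C \<Longrightarrow> f xs + g xs \<le> f z + g z"
    and z: "z \<in> C"
  shows "g xs - inner (gradf xs) (z - xs) \<le> g z"
proof -
  define D where "D = (norm (z - xs))\<^sup>2"
  have "g xs - inner (gradf xs) (z - xs) \<le> g z + t * (L / 2 * D)"
    if t: "0 < t" "t \<le> 1" for t
  proof -
    define w where "w = (1 - t) *\<^sub>R xs + t *\<^sub>R z"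
    have wy: "w - xs = t *\<^sub>R (z - xs)" by (simp add: w_def algebra_simps)
    have wC: "w \<in> C" unfolding w_def using \<open>convex C\<close> xs(1) z t by (intro convexD) auto
    have "g w \<le> (1 - t) * g xs + t * g z"
      unfolding w_def using convex_onD[OF gconv, of t xs z] t xs z by simp
    moreover have "f w \<le> f xs + inner (gradf xs) (w - xs) + L / 2 * (norm (w - xs))\<^sup>2"
      by (rule lipschitz_gradient_quadratic_bounds(1)[OF grad lip])
    moreover have "inner (gradf xs) (w - xs) = t * inner (gradf xs) (z - xs)" by (simp add: wy)
    moreover have "(norm (w - xs))\<^sup>2 = t\<^sup>2 * D" by (simp add: wy D_def power_mult_distrib)
    moreover have "f xs + g xs \<le> f w + g w" using xs(2)[OF wC] .
    ultimately have "t * (g xs - inner (gradf xs) (z - xs)) \<le> t * (g z + t * (L / 2 * D))"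
      by (simp add: field_simps power2_eq_square)
    then show ?thesis using t by simp
  qed
  then show ?thesis by (rule le_of_le_add_mult_small)
qed

lemma prox_objective_quadratic_growth:
  fixes g :: "'a::real_inner \<Rightarrow> real"
  assumes gconv: "convex_on C g" and "convex C"
    and x: "x \<in> C" "\<And>z. z \<in> C \<Longrightarrow> g x + inner v x + L / 2 * (norm (x - y))\<^sup>2
                              \<le> g z + inner v z + L / 2 * (norm (z - y))\<^sup>2"
    and z: "z \<in> C"
  shows "g x + inner v x + L / 2 * (norm (x - y))\<^sup>2 + L / 2 * (norm (z - x))\<^sup>2
         \<le> g z + inner v z + L / 2 * (norm (z - y))\<^sup>2"
proof -
  define D where "D = (norm (z - x))\<^sup>2"
  define \<phi> where "\<phi> w = g w + inner v w + L / 2 * (norm (w - y))\<^sup>2" for w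
  have "\<phi> x + L / 2 * D \<le> \<phi> z + t * (L / 2 * D)"
    if t: "0 < t" "t \<le> 1" for t
  proof -
    define w where "w = (1 - t) *\<^sub>R x + t *\<^sub>R z"
    have wy: "w - y = (1 - t) *\<^sub>R (x - y) + t *\<^sub>R (z - y)" by (simp add: w_def algebra_simps)
    have wC: "w \<in> C" unfolding w_def using \<open>convex C\<close> x(1) z t by (intro convexD) auto
    have "g w \<le> (1 - t) * g x + t * g z"
      unfolding w_def using convex_onD[OF gconv, of t x z] t x z by simp
    moreover have "inner v w = (1 - t) * inner v x + t * inner v z"
      by (simp add: w_def inner_add_right)
    moreover have "L / 2 * (norm (w - y))\<^sup>2 = (1 - t) * (L / 2 * (norm (x - y))\<^sup>2)
        + t * (L / 2 * (norm (z - y))\<^sup>2) - t * (1 - t) * (L / 2 * D)"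
      unfolding wy norm_convex_combination_power2 by (simp add: D_def norm_minus_commute field_simps)
    moreover have "\<phi> x \<le> \<phi> w" using x(2)[OF wC] by (simp add: \<phi>_def)
    ultimately have "t * (\<phi> x + L / 2 * D) \<le> t * (\<phi> z + t * (L / 2 * D))"
      unfolding \<phi>_def by (simp add: field_simps)
    then show ?thesis using t by simp
  qed
  then show ?thesis unfolding \<phi>_def D_def by (rule le_of_le_add_mult_small)
qed

lemma quadratic_le_linear_bound:
  fixes u K V L :: real
  assumes "L > 0" "K \<ge> 0" "V \<ge> 0" "u \<ge> 0" and quad: "L / 2 * u\<^sup>2 \<le> K + V * u"
  shows "u \<le> 1 + 2 * (K + V) / L"
proof (cases "u \<le> 1")
  case True
  have "0 \<le> 2 * (K + V) / L" using assms by simp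
  with True show ?thesis by linarith
next
  case False
  then have "K + V * u \<le> (K + V) * u"
    using \<open>K \<ge> 0\<close> mult_left_mono[of 1 u K] by (simp add: algebra_simps)
  with quad have "(L / 2 * u) * u \<le> (K + V) * u" by (simp add: power2_eq_square)
  then have "L / 2 * u \<le> K + V" using False by simp
  then show ?thesis using \<open>L > 0\<close> by (simp add: field_simps)
qed

lemma prox_sublevel_norm_bound:
  fixes b v w y :: "'a::real_inner"
  assumes "L > 0" and level: "a + inner b w + inner v w + L / 2 * (norm (w - y))\<^sup>2 \<le> c"
  shows "norm (w - y) \<le> 1 + 2 * (\<bar>c - a - inner (b + v) y\<bar> + norm (b + v)) / L"
proof (rule quadratic_le_linear_bound[OF \<open>L > 0\<close>])
  have "inner (b + v) w = inner (b + v) y + inner (b + v) (w - y)"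
    by (simp add: inner_diff_right)
  moreover have "- inner (b + v) (w - y) \<le> norm (b + v) * norm (w - y)"
    using Cauchy_Schwarz_ineq2[of "b + v" "w - y"] by (simp add: abs_le_iff)
  ultimately show "L / 2 * (norm (w - y))\<^sup>2 \<le> \<bar>c - a - inner (b + v) y\<bar> + norm (b + v) * norm (w - y)"
    using level abs_ge_self[of "c - a - inner (b + v) y"] by (simp add: inner_add_left)
qed auto

text \<open>The prox objective is only lower semicontinuous, so the minimum is taken of the
  continuous function \<open>(x, t) \<mapsto> t + \<langle>v, x\<rangle> + L/2 \<parallel>x - y\<parallel>\<^sup>2\<close> over a compact sublevel set of
  the closed epigraph; the affine minorant \<open>a + \<langle>b, \<cdot>\<rangle>\<close> makes that set bounded.\<close>

lemma prox_objective_has_minimizer: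
  fixes g :: "'a::euclidean_space \<Rightarrow> real"
  assumes x0: "x0 \<in> C" and closed_epi: "closed {(x, t). x \<in> C \<and> g x \<le> t}"
    and minor: "\<And>z. z \<in> C \<Longrightarrow> a + inner b z \<le> g z"
    and L: "L > 0"
  shows "\<exists>x\<in>C. \<forall>z\<in>C. g x + inner v x + L / 2 * (norm (x - y))\<^sup>2
                     \<le> g z + inner v z + L / 2 * (norm (z - y))\<^sup>2"
proof -
  define \<psi> where "\<psi> w = inner v w + L / 2 * (norm (w - y))\<^sup>2" for w
  define c where "c = g x0 + \<psi> x0"
  define S where "S = {(x, t). x \<in> C \<and> g x \<le> t} \<inter> {p. snd p + \<psi> (fst p) \<le> c}"
  define R where "R = 1 + 2 * (\<bar>c - a - inner (b + v) y\<bar> + norm (b + v)) / L"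
  define W where "W = norm y + R"
  have "w \<in> cball y R \<and> t \<in> {a - norm b * W .. c + norm v * W}" if "(w, t) \<in> S" for w t
  proof -
    from that have wC: "w \<in> C" and gt: "g w \<le> t" and tc: "t + \<psi> w \<le> c"
      by (auto simp: S_def)
    have gw: "a + inner b w \<le> g w" using minor[OF wC] .
    have "norm (w - y) \<le> R"
      unfolding R_def using gw gt tc
      by (intro prox_sublevel_norm_bound[OF L]) (simp add: \<psi>_def)
    then have nw: "norm w \<le> W"
      unfolding W_def using norm_triangle_ineq[of y "w - y"] by simp
    have "- inner b w \<le> norm b * W" "- inner v w \<le> norm v * W"
      using Cauchy_Schwarz_ineq2[of b w] Cauchy_Schwarz_ineq2[of v w]
        mult_left_mono[OF nw, of "norm b"] mult_left_mono[OF nw, of "norm v"]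
      by (simp_all add: abs_le_iff)
    moreover have "0 \<le> L / 2 * (norm (w - y))\<^sup>2" using L by simp
    then have "t \<le> c - inner v w" using tc unfolding \<psi>_def by linarith
    ultimately show ?thesis using \<open>norm (w - y) \<le> R\<close> gw gt
      by (simp add: dist_norm norm_minus_commute)
  qed
  then have "S \<subseteq> cball y R \<times> {a - norm b * W .. c + norm v * W}" by auto
  then have "bounded S"
    by (rule bounded_subset[OF bounded_Times[OF bounded_cball bounded_closed_interval]])
  moreover have "closed S" unfolding S_def
    by (intro closed_Int closed_epi closed_Collect_le) (auto simp: \<psi>_def intro!: continuous_intros)
  ultimately have "compact S" by (simp add: compact_eq_bounded_closed)
  moreover have "(x0, g x0) \<in> S" using x0 by (simp add: S_def c_def)
  moreover have "continuous_on S (\<lambda>p. snd p + \<psi> (fst p))"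
    unfolding \<psi>_def by (intro continuous_intros)
  ultimately obtain xm tm where "(xm, tm) \<in> S"
    and pmin: "\<forall>q\<in>S. tm + \<psi> xm \<le> snd q + \<psi> (fst q)"
    using continuous_attains_inf[of S "\<lambda>p. snd p + \<psi> (fst p)"] by fastforce
  then have xmC: "xm \<in> C" and gxm: "g xm \<le> tm" and xmc: "tm + \<psi> xm \<le> c"
    by (auto simp: S_def)
  have "g xm + \<psi> xm \<le> g z + \<psi> z" if "z \<in> C" for z
  proof (cases "g z + \<psi> z \<le> c")
    case True
    then have "(z, g z) \<in> S" using that by (simp add: S_def)
    then show ?thesis using pmin gxm by force
  qed (use gxm xmc in auto)
  then show ?thesis using xmC unfolding \<psi>_def by (auto simp: add.assoc)
qed

lemma T_L_minimizes:
  fixes g :: "'a::euclidean_space \<Rightarrow> real"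
  assumes gpcc: "proper_closed_convex g C" and L: "L > 0"
    and minor: "\<And>z. z \<in> C \<Longrightarrow> a + inner b z \<le> g z"
  shows "T_L g C gradf L y \<in> C"
    and "z \<in> C \<Longrightarrow> g (T_L g C gradf L y) + inner (gradf y) (T_L g C gradf L y)
            + L / 2 * (norm (T_L g C gradf L y - y))\<^sup>2 \<le> g z + inner (gradf y) z + L / 2 * (norm (z - y))\<^sup>2"
proof -
  from gpcc have "C \<noteq> {}" and "convex C" and gconv: "convex_on C g"
    and closed_epi: "closed {(x, t). x \<in> C \<and> g x \<le> t}" by (auto simp: proper_closed_convex_def)
  then obtain x0 where x0: "x0 \<in> C" by blast
  let ?P = "\<lambda>x. x \<in> C \<and> (\<forall>z\<in>C. g x + inner (gradf y) x + L / 2 * (norm (x - y))\<^sup>2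
                              \<le> g z + inner (gradf y) z + L / 2 * (norm (z - y))\<^sup>2)"
  obtain x where Px: "?P x"
    using prox_objective_has_minimizer[OF x0 closed_epi minor L, of "gradf y" y] by blast
  have "x' = x" if "?P x'" for x'
  proof -
    have "L / 2 * (norm (x' - x))\<^sup>2 \<le> 0"
      using prox_objective_quadratic_growth[OF gconv \<open>convex C\<close>, of x "gradf y" L y x'] Px that
      by fastforce
    then show ?thesis using L by (simp add: mult_le_0_iff)
  qed
  with Px have "?P (T_L g C gradf L y)"
    unfolding T_L_def by (rule theI)
  then show "T_L g C gradf L y \<in> C"
    and "z \<in> C \<Longrightarrow> g (T_L g C gradf L y) + inner (gradf y) (T_L g C gradf L y)
            + L / 2 * (norm (T_L g C gradf L y - y))\<^sup>2 \<le> g z + inner (gradf y) z + L / 2 * (norm (z - y))\<^sup>2"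
    by auto
qed

lemma T_L_fundamental_ineq:
  fixes f g :: "'a::euclidean_space \<Rightarrow> real"
  assumes grad: "\<And>z. GDERIV f z :> gradf z"
    and lip: "\<And>u v. norm (gradf u - gradf v) \<le> L * norm (u - v)"
    and sconv: "convex_on UNIV (\<lambda>z. f z - \<mu> / 2 * (norm z)\<^sup>2)"
    and gpcc: "proper_closed_convex g C" and L: "L > 0"
    and minor: "\<And>z. z \<in> C \<Longrightarrow> a + inner b z \<le> g z"
    and z: "z \<in> C"
  shows "f (T_L g C gradf L y) + g (T_L g C gradf L y)
     \<le> f z + g z + (L - \<mu>) / 2 * (norm (z - y))\<^sup>2 - L / 2 * (norm (z - T_L g C gradf L y))\<^sup>2"
proof -
  define xn where "xn = T_L g C gradf L y"
  from gpcc have "convex C" and gconv: "convex_on C g" by (auto simp: proper_closed_convex_def)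
  have "g xn + inner (gradf y) xn + L / 2 * (norm (xn - y))\<^sup>2 + L / 2 * (norm (z - xn))\<^sup>2
         \<le> g z + inner (gradf y) z + L / 2 * (norm (z - y))\<^sup>2"
    using prox_objective_quadratic_growth[OF gconv \<open>convex C\<close>, of xn "gradf y" L y z] z
      T_L_minimizes[OF gpcc L minor] unfolding xn_def by blast
  moreover have "f xn \<le> f y + inner (gradf y) (xn - y) + L / 2 * (norm (xn - y))\<^sup>2"
    by (rule lipschitz_gradient_quadratic_bounds(1)[OF grad lip])
  moreover have "f y + inner (gradf y) (z - y) + \<mu> / 2 * (norm (z - y))\<^sup>2 \<le> f z"
    by (rule strongly_convex_gradient_lower_bound[OF grad lip sconv])
  ultimately show ?thesis unfolding xn_def[symmetric]
    by (simp add: inner_diff_right field_simps)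
qed

text \<open>With \<open>\<beta> = 1 - q/\<alpha>\<close>, the difference of the two sides is
  \<open>\<beta>(1 - \<alpha>)(1 - \<alpha> - \<theta>)\<parallel>d\<parallel>\<^sup>2\<close>: the relation between \<open>\<theta>\<close> and \<open>\<alpha>\<close> kills the
  \<open>\<parallel>e\<parallel>\<^sup>2\<close> and \<open>\<langle>e, d\<rangle>\<close> coefficients.\<close>

lemma momentum_norm_ineq:
  fixes e d :: "'a::real_inner" and q \<alpha> \<theta> :: real
  assumes al: "0 < \<alpha>" "\<alpha> \<le> 1" "q \<le> \<alpha>"
    and th: "\<theta> * (1 - q) = (1 - q / \<alpha>) * (1 - \<alpha>)" "\<theta> \<le> 1 - \<alpha>"
  shows "(1 - q) * (norm (\<alpha> *\<^sub>R e + \<theta> *\<^sub>R d))\<^sup>2 - q * \<alpha> * (1 - \<alpha>) * (norm e)\<^sup>2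
       \<le> (1 - q / \<alpha>) * (norm (\<alpha> *\<^sub>R e + (1 - \<alpha>) *\<^sub>R d))\<^sup>2"
proof -
  define \<beta> where "\<beta> = 1 - q / \<alpha>"
  have hb: "\<beta> * \<alpha> - \<alpha> + q = 0" using al by (simp add: \<beta>_def field_simps)
  have ht: "\<beta> * (1 - \<alpha>) - (1 - q) * \<theta> = 0" using th(1) by (simp add: \<beta>_def mult.commute)
  have "\<beta> \<ge> 0" using al by (simp add: \<beta>_def field_simps)
  have "\<beta> * (\<alpha>\<^sup>2 * (norm e)\<^sup>2 + 2 * \<alpha> * (1 - \<alpha>) * inner e d + (1 - \<alpha>)\<^sup>2 * (norm d)\<^sup>2)
      - ((1 - q) * (\<alpha>\<^sup>2 * (norm e)\<^sup>2 + 2 * \<alpha> * \<theta> * inner e d + \<theta>\<^sup>2 * (norm d)\<^sup>2)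
         - q * \<alpha> * (1 - \<alpha>) * (norm e)\<^sup>2)
     = \<beta> * (1 - \<alpha>) * (1 - \<alpha> - \<theta>) * (norm d)\<^sup>2
       + \<alpha> * (\<beta> * \<alpha> - \<alpha> + q) * (norm e)\<^sup>2
       + (2 * \<alpha> * inner e d + \<theta> * (norm d)\<^sup>2) * (\<beta> * (1 - \<alpha>) - (1 - q) * \<theta>)"
    by (simp add: field_simps power2_eq_square)
  also have "\<dots> \<ge> 0"
    unfolding hb ht using \<open>\<beta> \<ge> 0\<close> al th(2) by simp
  finally show ?thesis
    unfolding norm_scaleR_add_power2 \<beta>_def[symmetric] by simp
qed

lemma T_L_momentum_step_ineq:
  fixes f g :: "'a::euclidean_space \<Rightarrow> real"
  assumes grad: "\<And>z. GDERIV f z :> gradf z"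
    and lip: "\<And>u v. norm (gradf u - gradf v) \<le> L * norm (u - v)"
    and sconv: "convex_on UNIV (\<lambda>z. f z - \<mu> / 2 * (norm z)\<^sup>2)"
    and gpcc: "proper_closed_convex g C" and L: "L > 0"
    and minor: "\<And>z. z \<in> C \<Longrightarrow> a0 + inner b z \<le> g z"
    and q: "\<mu> = q * L" and al: "0 < \<alpha>" "\<alpha> \<le> 1" "q \<le> \<alpha>"
    and th: "\<theta> * (1 - q) = (1 - q / \<alpha>) * (1 - \<alpha>)" "\<theta> \<le> 1 - \<alpha>"
    and aC: "a \<in> C" and wC: "w \<in> C"
    and xn: "xn = T_L g C gradf L (a + \<theta> *\<^sub>R (a - p))"
  shows "f xn + g xn - (f w + g w) + L / 2 * (norm ((1 - \<alpha>) *\<^sub>R a + \<alpha> *\<^sub>R w - xn))\<^sup>2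
     \<le> (1 - \<alpha>) * (f a + g a - (f w + g w))
        + (1 - q / \<alpha>) * (L / 2 * (norm (\<alpha> *\<^sub>R (a - w) + (1 - \<alpha>) *\<^sub>R (a - p)))\<^sup>2)"
proof -
  from gpcc have "convex C" and gconv: "convex_on C g" by (auto simp: proper_closed_convex_def)
  define z where "z = (1 - \<alpha>) *\<^sub>R a + \<alpha> *\<^sub>R w"
  define N where "N = (norm (\<alpha> *\<^sub>R (a - w) + \<theta> *\<^sub>R (a - p)))\<^sup>2"
  define Q where "Q = (norm (\<alpha> *\<^sub>R (a - w) + (1 - \<alpha>) *\<^sub>R (a - p)))\<^sup>2"
  have zC: "z \<in> C" unfolding z_def using \<open>convex C\<close> aC wC al by (intro convexD) auto
  have "norm (z - (a + \<theta> *\<^sub>R (a - p))) = norm (\<alpha> *\<^sub>R (a - w) + \<theta> *\<^sub>R (a - p))"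
    by (simp add: z_def algebra_simps norm_minus_commute)
  then have "f xn + g xn \<le> f z + g z + (L - \<mu>) / 2 * N - L / 2 * (norm (z - xn))\<^sup>2"
    using T_L_fundamental_ineq[OF grad lip sconv gpcc L minor zC, where y = "a + \<theta> *\<^sub>R (a - p)"]
    unfolding xn N_def by simp
  moreover have "f z \<le> (1 - \<alpha>) * f a + \<alpha> * f w - \<mu> / 2 * (\<alpha> * (1 - \<alpha>) * (norm (a - w))\<^sup>2)"
    unfolding z_def using strongly_convex_combination[OF sconv, of \<alpha> a w] al by simp
  moreover have "g z \<le> (1 - \<alpha>) * g a + \<alpha> * g w"
    unfolding z_def using convex_onD[OF gconv, of \<alpha> a w] al aC wC by simp
  moreover have "(L - \<mu>) / 2 * N - \<mu> / 2 * (\<alpha> * (1 - \<alpha>) * (norm (a - w))\<^sup>2)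
      \<le> (1 - q / \<alpha>) * (L / 2 * Q)"
  proof -
    have "(L - \<mu>) / 2 * N - \<mu> / 2 * (\<alpha> * (1 - \<alpha>) * (norm (a - w))\<^sup>2)
        = L / 2 * ((1 - q) * N - q * \<alpha> * (1 - \<alpha>) * (norm (a - w))\<^sup>2)"
      by (simp add: q field_simps)
    also have "\<dots> \<le> L / 2 * ((1 - q / \<alpha>) * Q)"
      unfolding N_def Q_def using L by (intro mult_left_mono momentum_norm_ineq[OF al th]) auto
    finally show ?thesis by (simp add: mult.left_commute)
  qed
  moreover have "(1 - \<alpha>) * (f a + g a - (f w + g w))
      = (1 - \<alpha>) * f a + \<alpha> * f w + ((1 - \<alpha>) * g a + \<alpha> * g w) - (f w + g w)"
    by (simp add: algebra_simps)
  ultimately show ?thesis unfolding z_def[symmetric] Q_def[symmetric] by linarith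
qed

lemma lyapunov_contraction:
  fixes f g :: "'a::euclidean_space \<Rightarrow> real"
  assumes grad: "\<And>z. GDERIV f z :> gradf z"
    and lip: "\<And>u v. norm (gradf u - gradf v) \<le> L * norm (u - v)"
    and sconv: "convex_on UNIV (\<lambda>z. f z - \<mu> / 2 * (norm z)\<^sup>2)"
    and gpcc: "proper_closed_convex g C" and L: "L > 0"
    and minor: "\<And>z. z \<in> C \<Longrightarrow> a0 + inner b z \<le> g z"
    and xs: "xs \<in> C" "\<And>z. z \<in> C \<Longrightarrow> f xs + g xs \<le> f z + g z"
    and q: "\<mu> = q * L" and al: "0 < \<alpha>" "\<alpha> \<le> 1" "q \<le> \<alpha>"
    and th: "\<theta> * (1 - q) = (1 - q / \<alpha>) * (1 - \<alpha>)" "\<theta> \<le> 1 - \<alpha>"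
    and aC: "a \<in> C"
  shows "lyapunov (\<lambda>z. f z + g z) xs L \<alpha> (T_L g C gradf L (a + \<theta> *\<^sub>R (a - p))) a
     \<le> (1 - min (q / \<alpha>) \<alpha>) * lyapunov (\<lambda>z. f z + g z) xs L \<alpha> a p"
proof -
  define xn where "xn = T_L g C gradf L (a + \<theta> *\<^sub>R (a - p))"
  define gap where "gap = f a + g a - (f xs + g xs)"
  define Q where "Q = L / 2 * (norm (\<alpha> *\<^sub>R (a - xs) + (1 - \<alpha>) *\<^sub>R (a - p)))\<^sup>2"
  define \<rho> where "\<rho> = min (q / \<alpha>) \<alpha>"
  have "xn - xs + (1 / \<alpha> - 1) *\<^sub>R (xn - a) = (1 / \<alpha>) *\<^sub>R (xn - ((1 - \<alpha>) *\<^sub>R a + \<alpha> *\<^sub>R xs))"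
    and "a - xs + (1 / \<alpha> - 1) *\<^sub>R (a - p) = (1 / \<alpha>) *\<^sub>R (\<alpha> *\<^sub>R (a - xs) + (1 - \<alpha>) *\<^sub>R (a - p))"
    using al by (simp_all add: algebra_simps)
  then have "lyapunov (\<lambda>z. f z + g z) xs L \<alpha> xn a
      = f xn + g xn - (f xs + g xs) + L / 2 * (norm ((1 - \<alpha>) *\<^sub>R a + \<alpha> *\<^sub>R xs - xn))\<^sup>2"
    and "lyapunov (\<lambda>z. f z + g z) xs L \<alpha> a p = gap + Q"
    using al by (simp_all add: lyapunov_def gap_def Q_def power_divide norm_minus_commute)
  moreover have "f xn + g xn - (f xs + g xs) + L / 2 * (norm ((1 - \<alpha>) *\<^sub>R a + \<alpha> *\<^sub>R xs - xn))\<^sup>2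
      \<le> (1 - \<alpha>) * gap + (1 - q / \<alpha>) * Q"
    unfolding gap_def Q_def
    by (rule T_L_momentum_step_ineq[OF grad lip sconv gpcc L minor q al th aC xs(1) xn_def])
  moreover have "(1 - \<alpha>) * gap \<le> (1 - \<rho>) * gap" and "(1 - q / \<alpha>) * Q \<le> (1 - \<rho>) * Q"
    using xs(2)[OF aC] L by (intro mult_right_mono; simp add: \<rho>_def gap_def Q_def)+
  ultimately show ?thesis
    unfolding xn_def[symmetric] \<rho>_def[symmetric] by (simp add: distrib_left)
qed

lemma accelerated_prox_grad_lyapunov_decay:
  fixes f g :: "'a::euclidean_space \<Rightarrow> real" and x y :: "nat \<Rightarrow> 'a"
  assumes grad: "\<And>z. GDERIV f z :> gradf z"
    and lip: "\<And>u v. norm (gradf u - gradf v) \<le> L * norm (u - v)"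
    and sconv: "convex_on UNIV (\<lambda>z. f z - \<mu> / 2 * (norm z)\<^sup>2)"
    and gpcc: "proper_closed_convex g C" and L: "L > 0"
    and xs: "xs \<in> C" "\<And>z. z \<in> C \<Longrightarrow> f xs + g xs \<le> f z + g z"
    and q: "\<mu> = q * L" and al: "0 < \<alpha>" "\<alpha> \<le> 1" "q \<le> \<alpha>"
    and th: "\<theta> * (1 - q) = (1 - q / \<alpha>) * (1 - \<alpha>)" "\<theta> \<le> 1 - \<alpha>"
    and x1: "x 1 \<in> C" and y1: "y 1 = x 1"
    and xstep: "\<And>k. k \<ge> 1 \<Longrightarrow> x (k + 1) = T_L g C gradf L (y k)"
    and ystep: "\<And>k. k \<ge> 1 \<Longrightarrow> y (k + 1) = x (k + 1) + \<theta> *\<^sub>R (x (k + 1) - x k)"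
    and k: "k \<ge> 1"
  shows "lyapunov (\<lambda>z. f z + g z) xs L \<alpha> (x (k + 1)) (x k)
     \<le> (1 - min (q / \<alpha>) \<alpha>) ^ k * lyapunov (\<lambda>z. f z + g z) xs L \<alpha> (x 1) (x 1)"
proof -
  from gpcc have "convex C" and gconv: "convex_on C g" by (auto simp: proper_closed_convex_def)
  obtain a b where minor: "\<And>z. z \<in> C \<Longrightarrow> a + inner b z \<le> g z"
  proof
    fix z assume "z \<in> C"
    then show "(g xs + inner (gradf xs) xs) + inner (- gradf xs) z \<le> g z"
      using minimizer_neg_gradient_subgradient[OF grad lip gconv \<open>convex C\<close> xs]
      by (simp add: inner_diff_right algebra_simps)
  qed
  have contraction: "lyapunov (\<lambda>z. f z + g z) xs L \<alpha> (T_L g C gradf L (a + \<theta> *\<^sub>R (a - p))) a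
      \<le> (1 - min (q / \<alpha>) \<alpha>) * lyapunov (\<lambda>z. f z + g z) xs L \<alpha> a p" if "a \<in> C" for a p
    using lyapunov_contraction[OF grad lip sconv gpcc L minor xs q al th] that by blast
  have xC: "x k \<in> C" if "k \<ge> 1" for k
    using that
  proof (induction k rule: nat_induct_at_least)
    case (Suc k)
    then show ?case using xstep[of k] T_L_minimizes(1)[OF gpcc L minor] by simp
  qed (use x1 in simp)
  show ?thesis
    using k
  proof (induction k rule: nat_induct_at_least)
    case base
    show ?case using contraction[OF x1, of "x 1"] xstep[of 1] y1 by (simp add: numeral_2_eq_2)
  next
    case (Suc k)
    have "lyapunov (\<lambda>z. f z + g z) xs L \<alpha> (x (Suc k + 1)) (x (Suc k))
        \<le> (1 - min (q / \<alpha>) \<alpha>) * lyapunov (\<lambda>z. f z + g z) xs L \<alpha> (x (k + 1)) (x k)"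
      using contraction[OF xC, of "k + 1" "x k"] xstep[of "k + 1"] ystep[of k] Suc.hyps by simp
    also have "\<dots> \<le> (1 - min (q / \<alpha>) \<alpha>) * ((1 - min (q / \<alpha>) \<alpha>) ^ k
        * lyapunov (\<lambda>z. f z + g z) xs L \<alpha> (x 1) (x 1))"
      using Suc.IH al by (intro mult_left_mono) auto
    finally show ?case by simp
  qed
qed

lemma momentum_parameters:
  fixes q r :: real
  assumes q: "0 < q" "q < 1" and r: "sqrt q < r" "r < 1 / sqrt q"
  defines "\<alpha> \<equiv> r * sqrt q" and "\<theta> \<equiv> (1 - sqrt q / r) * (1 - r * sqrt q) / (1 - q)"
  shows "q < \<alpha>" "\<alpha> < 1" "\<theta> * (1 - q) = (1 - q / \<alpha>) * (1 - \<alpha>)" "\<theta> \<le> 1 - \<alpha>"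
proof -
  define s where "s = sqrt q"
  have s0: "s > 0" and ss: "s * s = q" using q by (simp_all add: s_def)
  have r0: "r > 0" using r s0 unfolding s_def by linarith
  have "s < r" using r(1) by (simp add: s_def)
  then have "s * s < r * s" using s0 by simp
  then show "q < \<alpha>" unfolding \<alpha>_def ss by (simp add: s_def)
  show "\<alpha> < 1" unfolding \<alpha>_def using r s0 by (simp add: s_def field_simps)
  have "s / r = q / \<alpha>" unfolding \<alpha>_def s_def[symmetric] ss[symmetric] using s0 r0 by simp
  then show th: "\<theta> * (1 - q) = (1 - q / \<alpha>) * (1 - \<alpha>)"
    unfolding \<theta>_def \<alpha>_def s_def[symmetric] using q by simp
  have "q \<le> q / \<alpha>" using \<open>q < \<alpha>\<close> \<open>\<alpha> < 1\<close> q by (simp add: field_simps)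
  then have "(1 - q / \<alpha>) * (1 - \<alpha>) \<le> (1 - q) * (1 - \<alpha>)"
    using \<open>\<alpha> < 1\<close> by (intro mult_right_mono) auto
  then show "\<theta> \<le> 1 - \<alpha>" unfolding th[symmetric] using q by (simp add: mult.commute)
qed

theorem mainTheorem14:
  fixes f g :: "'a::euclidean_space \<Rightarrow> real" and C :: "'a set"
    and gradf :: "'a \<Rightarrow> 'a" and L \<mu> r :: real
    and xstar :: 'a and x y :: "nat \<Rightarrow> 'a"
  assumes grad: "\<And>z. GDERIV f z :> gradf z"
    and lip: "\<And>u v. norm (gradf u - gradf v) \<le> L * norm (u - v)"
    and sconv: "convex_on UNIV (\<lambda>z. f z - \<mu> / 2 * (norm z)\<^sup>2)"
    and gpcc: "proper_closed_convex g C"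
    and Lmu: "L > \<mu>" "\<mu> > 0"
    and xstar: "xstar \<in> C" "\<And>z. z \<in> C \<Longrightarrow> f xstar + g xstar \<le> f z + g z"
    and r: "sqrt (\<mu> / L) < r" "r < 1 / sqrt (\<mu> / L)"
    and y1: "y 1 = x 1"
    and xstep: "\<And>k. k \<ge> 1 \<Longrightarrow> x (k + 1) = y k - (1 / L) *\<^sub>R G_L g C gradf L (y k)"
    and ystep: "\<And>k. k \<ge> 1 \<Longrightarrow>
       y (k + 1) = x (k + 1) + ((1 - sqrt (\<mu> / L) / r) * (1 - r * sqrt (\<mu> / L)) / (1 - \<mu> / L))
                               *\<^sub>R (x (k + 1) - x k)"
    and x1: "x 1 \<in> C"
  shows "\<forall>k\<ge>1.
     (f (x (k + 1)) + g (x (k + 1))) - (f xstar + g xstar)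
       + L * (r * sqrt (\<mu> / L))\<^sup>2 / 2
         * (norm (x (k + 1) - xstar + (1 / (r * sqrt (\<mu> / L)) - 1) *\<^sub>R (x (k + 1) - x k)))\<^sup>2
     \<le> (1 - min (\<mu> / ((r * sqrt (\<mu> / L)) * L)) (r * sqrt (\<mu> / L))) ^ k
       * ((f (x 1) + g (x 1)) - (f xstar + g xstar)
          + L * (r * sqrt (\<mu> / L))\<^sup>2 / 2 * (norm (x 1 - xstar))\<^sup>2)"
proof -
  define q where "q = \<mu> / L"
  have L: "L > 0" using Lmu by linarith
  have q: "0 < q" "q < 1" using Lmu L by (auto simp: q_def field_simps)
  note parameters = momentum_parameters[OF q r[folded q_def]]
  have xstep': "x (k + 1) = T_L g C gradf L (y k)" if "k \<ge> 1" for k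
    using xstep[OF that] L by (simp add: G_L_def)
  have mu: "\<mu> = q * L" and al: "0 < r * sqrt q" "r * sqrt q \<le> 1" "q \<le> r * sqrt q"
    using L q parameters(1,2) by (auto simp: q_def)
  note decay = accelerated_prox_grad_lyapunov_decay[OF grad lip sconv gpcc L xstar
      mu al parameters(3,4) x1 y1 xstep' ystep[folded q_def]]
  have "\<mu> / (r * sqrt q * L) = q / (r * sqrt q)" by (simp add: q_def)
  then show ?thesis
    using decay unfolding q_def[symmetric] by (simp add: lyapunov_def)
qed

end
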